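(* For $O\in\mathbb{R}^2$ let $v$ be a uniform random point in $[0,1]^2$, $g_1(O):=\mathbb{E}(d(O,v))$, and let $g_3(O)$ be the Lebesgue measure of $\{x\in[0,1]^2:d(O,x)>\tfrac34 g_1(O)\}$. Then for all $O,O'\in\mathbb{R}^2$, $|g_3(O)-g_3(O')|\le(3+\sqrt2)\,d(O,O')$.
   Context: $d$ is Euclidean distance. *)

theory Defs
  imports "HOL-Analysis.Analysis"
begin

text \<open>Points of the plane are pairs of reals; dist on real \<times> real is Euclidean distance.
  The unit square is cbox (0,0) (1,1); the uniform distribution on it is Lebesgue measure
  restricted to it (total mass 1).\<close>

definition unit_sq :: "(real \<times> real) set" where
  "unit_sq = cbox (0,0) (1,1)"

definition g1 :: "real \<times> real \<Rightarrow> real" where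
  "g1 P = (\<integral>v. dist P v \<partial>(uniform_measure lborel unit_sq))"

definition g3 :: "real \<times> real \<Rightarrow> real" where
  "g3 P = measure lborel {x \<in> unit_sq. dist P x > 3/4 * g1 P}"

end

theory Submission
  imports Defs
begin

(* The region {x \<in> [0,1]\<^sup>2. d(P,x) > r} moves rigidly with P, so replacing P by Q changes its
  area by at most the area of the part of the square not covered by its translate by Q - P,
  which is at most |t1| + |t2| \<le> sqrt 2 d(P,Q).  Changing the radius from s to r changes the area
  by the area of the annulus s < d(Q,x) \<le> r inside the square, which is at most 4(r - s):
  on the annulus 1 \<le> |x1 - q1|/d + |x2 - q2|/d, and on each vertical (horizontal) line the weight
  |x2 - q2|/d (resp. |x1 - q1|/d) is the derivative of d along the line, so it integrates to at
  most 2(r - s) over the annulus.  Finally g1 is 1-Lipschitz, so the radius 3/4 g1 moves by at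
  most 3/4 d(P,Q), and sqrt 2 + 4 * 3/4 = 3 + sqrt 2. *)

lemma has_integral_abs_div_sqrt_sum_squares:
  fixes a c d :: real
  assumes "0 \<le> c" "c \<le> d"
  shows "((\<lambda>b. \<bar>b\<bar> / sqrt (a\<^sup>2 + b\<^sup>2)) has_integral (sqrt (a\<^sup>2 + d\<^sup>2) - sqrt (a\<^sup>2 + c\<^sup>2))) {c..d}"
proof (rule fundamental_theorem_of_calculus_interior[OF assms(2)])
  show "continuous_on {c..d} (\<lambda>b. sqrt (a\<^sup>2 + b\<^sup>2))"
    by (intro continuous_intros)
next
  fix b assume "b \<in> {c<..<d}"
  then have "0 < b" using assms by auto
  then have "0 < a\<^sup>2 + b\<^sup>2" by (simp add: add_nonneg_pos)
  with \<open>0 < b\<close> have "((\<lambda>b. sqrt (a\<^sup>2 + b\<^sup>2)) has_real_derivative \<bar>b\<bar> / sqrt (a\<^sup>2 + b\<^sup>2)) (at b)"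
    by (auto intro!: derivative_eq_intros simp: field_simps)
  then show "((\<lambda>b. sqrt (a\<^sup>2 + b\<^sup>2)) has_vector_derivative \<bar>b\<bar> / sqrt (a\<^sup>2 + b\<^sup>2)) (at b)"
    by (simp add: has_real_derivative_iff_has_vector_derivative)
qed

lemma sqrt_add_max_0_diff_squares:
  fixes a r :: real
  assumes "0 \<le> r"
  shows "sqrt (a\<^sup>2 + max 0 (r\<^sup>2 - a\<^sup>2)) = max \<bar>a\<bar> r"
proof -
  have "a\<^sup>2 + max 0 (r\<^sup>2 - a\<^sup>2) = (max \<bar>a\<bar> r)\<^sup>2"
    using assms abs_le_square_iff[of a r] by (auto simp: max_def)
  then show ?thesis by simp
qed

lemma abs_bounds_if_sqrt_sum_squares_between:
  fixes a b s r :: real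
  assumes "0 \<le> s" "s < sqrt (a\<^sup>2 + b\<^sup>2)" "sqrt (a\<^sup>2 + b\<^sup>2) \<le> r"
  shows "sqrt (max 0 (s\<^sup>2 - a\<^sup>2)) \<le> \<bar>b\<bar>" "\<bar>b\<bar> \<le> sqrt (max 0 (r\<^sup>2 - a\<^sup>2))"
proof -
  have "s\<^sup>2 < (sqrt (a\<^sup>2 + b\<^sup>2))\<^sup>2"
    using assms by (intro power_strict_mono) auto
  moreover have "a\<^sup>2 + b\<^sup>2 \<le> r\<^sup>2"
    using assms(3) by (rule sqrt_le_D)
  ultimately have "max 0 (s\<^sup>2 - a\<^sup>2) \<le> b\<^sup>2" "b\<^sup>2 \<le> max 0 (r\<^sup>2 - a\<^sup>2)"
    by auto
  then show "sqrt (max 0 (s\<^sup>2 - a\<^sup>2)) \<le> \<bar>b\<bar>" "\<bar>b\<bar> \<le> sqrt (max 0 (r\<^sup>2 - a\<^sup>2))"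
    by (metis real_sqrt_abs real_sqrt_le_mono)+
qed

lemma nn_integral_abs_div_sqrt_sum_squares_le:
  fixes a s r :: real
  assumes "0 \<le> s" "s \<le> r"
  shows "(\<integral>\<^sup>+b. ennreal (\<bar>b\<bar> / sqrt (a\<^sup>2 + b\<^sup>2)) *
            indicator {b. s < sqrt (a\<^sup>2 + b\<^sup>2) \<and> sqrt (a\<^sup>2 + b\<^sup>2) \<le> r} b \<partial>lborel)
         \<le> ennreal (2 * (r - s))"
proof -
  define f where "f b = \<bar>b\<bar> / sqrt (a\<^sup>2 + b\<^sup>2)" for b
  define c where "c = sqrt (max 0 (s\<^sup>2 - a\<^sup>2))"
  define d where "d = sqrt (max 0 (r\<^sup>2 - a\<^sup>2))"
  have "s\<^sup>2 \<le> r\<^sup>2" using assms by (intro power_mono)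
  then have "0 \<le> c" "c \<le> d"
    unfolding c_def d_def by (auto intro!: real_sqrt_le_mono)
  have "sqrt (a\<^sup>2 + d\<^sup>2) - sqrt (a\<^sup>2 + c\<^sup>2) = max (\<bar>a\<bar>) r - max (\<bar>a\<bar>) s"
    unfolding c_def d_def using assms by (simp add: sqrt_add_max_0_diff_squares)
  also have "\<dots> \<le> r - s" using assms by linarith
  finally have cd_le: "sqrt (a\<^sup>2 + d\<^sup>2) - sqrt (a\<^sup>2 + c\<^sup>2) \<le> r - s" .
  have int_pos: "(f has_integral (sqrt (a\<^sup>2 + d\<^sup>2) - sqrt (a\<^sup>2 + c\<^sup>2))) {c..d}"
    unfolding f_def by (rule has_integral_abs_div_sqrt_sum_squares) fact+
  moreover have "(\<lambda>b. f (- b)) = f"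
    by (simp add: f_def fun_eq_iff)
  ultimately have int_neg: "(f has_integral (sqrt (a\<^sup>2 + d\<^sup>2) - sqrt (a\<^sup>2 + c\<^sup>2))) {-d..-c}"
    using has_integral_reflect_real[where f=f and a=c and b=d] by simp
  have "ennreal (f b) * indicator {b. s < sqrt (a\<^sup>2 + b\<^sup>2) \<and> sqrt (a\<^sup>2 + b\<^sup>2) \<le> r} b
      \<le> ennreal (indicator {c..d} b * f b) + ennreal (indicator {-d..-c} b * f b)" for b
  proof (cases "s < sqrt (a\<^sup>2 + b\<^sup>2) \<and> sqrt (a\<^sup>2 + b\<^sup>2) \<le> r")
    case True
    then have "c \<le> \<bar>b\<bar>" "\<bar>b\<bar> \<le> d"
      unfolding c_def d_def using assms(1) by (auto intro: abs_bounds_if_sqrt_sum_squares_between)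
    then have "b \<in> {c..d} \<or> b \<in> {-d..-c}" by auto
    then show ?thesis using True by (auto simp: indicator_def f_def)
  qed simp
  then have "(\<integral>\<^sup>+b. ennreal (f b) * indicator {b. s < sqrt (a\<^sup>2 + b\<^sup>2) \<and> sqrt (a\<^sup>2 + b\<^sup>2) \<le> r} b \<partial>lborel)
      \<le> (\<integral>\<^sup>+b. ennreal (indicator {c..d} b * f b) \<partial>lborel) + (\<integral>\<^sup>+b. ennreal (indicator {-d..-c} b * f b) \<partial>lborel)"
    by (subst nn_integral_add[symmetric]) (auto simp: f_def intro!: nn_integral_mono)
  also have "\<dots> = ennreal (sqrt (a\<^sup>2 + d\<^sup>2) - sqrt (a\<^sup>2 + c\<^sup>2)) + ennreal (sqrt (a\<^sup>2 + d\<^sup>2) - sqrt (a\<^sup>2 + c\<^sup>2))"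
    using nn_integral_has_integral_lebesgue[OF _ int_pos] nn_integral_has_integral_lebesgue[OF _ int_neg]
    by (simp add: f_def)
  also have "\<dots> \<le> ennreal (r - s) + ennreal (r - s)"
    using cd_le by (intro add_mono ennreal_leI)
  also have "\<dots> = ennreal (2 * (r - s))"
    using assms by (simp flip: ennreal_plus)
  finally show ?thesis unfolding f_def .
qed

lemma measurable_fst_borel [measurable]:
  "(fst :: 'a::topological_space \<times> 'b::topological_space \<Rightarrow> 'a) \<in> borel_measurable borel"
  by (intro borel_measurable_continuous_onI continuous_intros)

lemma measurable_snd_borel [measurable]:
  "(snd :: 'a::topological_space \<times> 'b::topological_space \<Rightarrow> 'b) \<in> borel_measurable borel"
  by (intro borel_measurable_continuous_onI continuous_intros)

lemma Times_in_sets_borel [measurable]: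
  fixes A :: "'a::second_countable_topology set" and B :: "'b::second_countable_topology set"
  assumes "A \<in> sets borel" "B \<in> sets borel"
  shows "A \<times> B \<in> sets borel"
  using pair_measureI[OF assms] unfolding borel_prod .

lemma nn_integral_lborel_fst_snd:
  fixes f :: "'a::euclidean_space \<times> 'b::euclidean_space \<Rightarrow> ennreal"
  assumes "f \<in> borel_measurable borel"
  shows "(\<integral>\<^sup>+z. f z \<partial>lborel) = (\<integral>\<^sup>+x. \<integral>\<^sup>+y. f (x, y) \<partial>lborel \<partial>lborel)"
proof -
  have "f \<in> borel_measurable (lborel \<Otimes>\<^sub>M lborel)"
    using assms by (simp add: lborel_prod)
  from lborel.nn_integral_fst[OF this] show ?thesis
    by (simp add: lborel_prod)
qed

lemma nn_integral_lborel_snd_fst: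
  fixes f :: "'a::euclidean_space \<times> 'b::euclidean_space \<Rightarrow> ennreal"
  assumes "f \<in> borel_measurable borel"
  shows "(\<integral>\<^sup>+z. f z \<partial>lborel) = (\<integral>\<^sup>+y. \<integral>\<^sup>+x. f (x, y) \<partial>lborel \<partial>lborel)"
proof -
  have "f \<in> borel_measurable (lborel \<Otimes>\<^sub>M lborel)"
    using assms by (simp add: lborel_prod)
  from lborel_pair.nn_integral_snd[OF this] show ?thesis
    by (simp add: lborel_prod)
qed

lemma nn_integral_lborel_swap:
  fixes f :: "'a::euclidean_space \<times> 'b::euclidean_space \<Rightarrow> ennreal"
  assumes [measurable]: "f \<in> borel_measurable borel"
  shows "(\<integral>\<^sup>+z. f (prod.swap z) \<partial>lborel) = (\<integral>\<^sup>+z. f z \<partial>lborel)"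
proof -
  have swap_measurable: "(\<lambda>z. f (prod.swap z)) \<in> borel_measurable borel"
    unfolding prod.swap_def by measurable
  show ?thesis
    using nn_integral_lborel_fst_snd[OF swap_measurable] nn_integral_lborel_snd_fst[OF assms] by simp
qed

definition annulus :: "'a::metric_space \<Rightarrow> real \<Rightarrow> real \<Rightarrow> 'a set" where
  "annulus Q s r = {x. s < dist Q x \<and> dist Q x \<le> r}"

lemma annulus_in_sets_borel [measurable]:
  fixes Q :: "'a::{metric_space, second_countable_topology}"
  shows "annulus Q s r \<in> sets borel"
  unfolding annulus_def by measurable

lemma nn_integral_annulus_slice_le:
  fixes Q :: "real \<times> real"
  assumes "0 \<le> s" "s \<le> r"
  shows "(\<integral>\<^sup>+y. ennreal (\<bar>snd Q - y\<bar> / dist Q (x, y)) * indicator (annulus Q s r) (x, y) \<partial>lborel)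
         \<le> ennreal (2 * (r - s))"
proof -
  obtain q1 q2 where Q: "Q = (q1, q2)" by (cases Q)
  define a where "a = q1 - x"
  define h where "h b = ennreal (\<bar>b\<bar> / sqrt (a\<^sup>2 + b\<^sup>2)) *
    indicator {b. s < sqrt (a\<^sup>2 + b\<^sup>2) \<and> sqrt (a\<^sup>2 + b\<^sup>2) \<le> r} b" for b
  have [measurable]: "h \<in> borel_measurable borel"
    unfolding h_def by measurable
  have "dist Q (x, y) = sqrt (a\<^sup>2 + (- q2 + y)\<^sup>2)" for y
    by (simp add: Q a_def dist_Pair_Pair dist_real_def power2_commute)
  then have "(\<integral>\<^sup>+y. ennreal (\<bar>snd Q - y\<bar> / dist Q (x, y)) * indicator (annulus Q s r) (x, y) \<partial>lborel)
      = (\<integral>\<^sup>+y. h (- q2 + 1 * y) \<partial>lborel)"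
    by (simp add: Q h_def annulus_def indicator_def abs_minus_commute)
  also have "\<dots> = (\<integral>\<^sup>+b. h b \<partial>lborel)"
    using nn_integral_real_affine[of h 1 "- q2"] by simp
  also have "\<dots> \<le> ennreal (2 * (r - s))"
    unfolding h_def using assms by (rule nn_integral_abs_div_sqrt_sum_squares_le)
  finally show ?thesis .
qed

lemma nn_integral_annulus_weight_le:
  fixes Q :: "real \<times> real"
  assumes [measurable]: "A \<in> sets borel" "B \<in> sets borel" and "0 \<le> s" "s \<le> r"
  shows "(\<integral>\<^sup>+z. ennreal (\<bar>snd Q - snd z\<bar> / dist Q z) * indicator (A \<times> B \<inter> annulus Q s r) z \<partial>lborel)
         \<le> ennreal (2 * (r - s)) * emeasure lborel A"
proof -
  have "(\<integral>\<^sup>+z. ennreal (\<bar>snd Q - snd z\<bar> / dist Q z) * indicator (A \<times> B \<inter> annulus Q s r) z \<partial>lborel)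
      = (\<integral>\<^sup>+x. \<integral>\<^sup>+y. ennreal (\<bar>snd Q - y\<bar> / dist Q (x, y)) * indicator (A \<times> B \<inter> annulus Q s r) (x, y) \<partial>lborel \<partial>lborel)"
    by (subst nn_integral_lborel_fst_snd) simp_all
  also have "\<dots> \<le> (\<integral>\<^sup>+x. indicator A x * ennreal (2 * (r - s)) \<partial>lborel)"
  proof (rule nn_integral_mono)
    fix x
    have "(\<integral>\<^sup>+y. ennreal (\<bar>snd Q - y\<bar> / dist Q (x, y)) * indicator (A \<times> B \<inter> annulus Q s r) (x, y) \<partial>lborel)
        \<le> (\<integral>\<^sup>+y. indicator A x * (ennreal (\<bar>snd Q - y\<bar> / dist Q (x, y)) * indicator (annulus Q s r) (x, y)) \<partial>lborel)"
      by (intro nn_integral_mono) (simp add: indicator_def)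
    also have "\<dots> = indicator A x * (\<integral>\<^sup>+y. ennreal (\<bar>snd Q - y\<bar> / dist Q (x, y)) * indicator (annulus Q s r) (x, y) \<partial>lborel)"
      by (rule nn_integral_cmult) measurable
    also have "\<dots> \<le> indicator A x * ennreal (2 * (r - s))"
      using assms by (intro mult_left_mono nn_integral_annulus_slice_le) auto
    finally show "(\<integral>\<^sup>+y. ennreal (\<bar>snd Q - y\<bar> / dist Q (x, y)) * indicator (A \<times> B \<inter> annulus Q s r) (x, y) \<partial>lborel)
        \<le> indicator A x * ennreal (2 * (r - s))" .
  qed
  also have "\<dots> = ennreal (2 * (r - s)) * emeasure lborel A"
    using nn_integral_cmult_indicator[of A lborel "ennreal (2 * (r - s))"] by (simp add: mult.commute)
  finally show ?thesis .
qed

lemma dist_le_abs_diff_fst_add_abs_diff_snd: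
  fixes Q z :: "real \<times> real"
  shows "dist Q z \<le> \<bar>fst Q - fst z\<bar> + \<bar>snd Q - snd z\<bar>"
  using sqrt_sum_squares_le_sum_abs[of "fst Q - fst z" "snd Q - snd z"]
  by (cases Q; cases z) (simp add: dist_Pair_Pair dist_real_def)

lemma emeasure_annulus_le:
  fixes Q :: "real \<times> real"
  assumes [measurable]: "A \<in> sets borel" "B \<in> sets borel" and "0 \<le> s" "s \<le> r"
  shows "emeasure lborel (A \<times> B \<inter> annulus Q s r)
         \<le> ennreal (2 * (r - s)) * (emeasure lborel A + emeasure lborel B)"
proof -
  let ?R = "A \<times> B \<inter> annulus Q s r"
  define w1 where "w1 z = ennreal (\<bar>fst Q - fst z\<bar> / dist Q z) * indicator ?R z" for z
  define w2 where "w2 z = ennreal (\<bar>snd Q - snd z\<bar> / dist Q z) * indicator ?R z" for z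
  define v where "v z = ennreal (\<bar>snd (prod.swap Q) - snd z\<bar> / dist (prod.swap Q) z) *
    indicator (B \<times> A \<inter> annulus (prod.swap Q) s r) z" for z
  have [measurable]: "w1 \<in> borel_measurable borel" "w2 \<in> borel_measurable borel" "v \<in> borel_measurable borel"
    unfolding w1_def w2_def v_def by measurable
  (* w1 is the weight w2 of the configuration reflected in the diagonal *)
  have w1_swap: "w1 z = v (prod.swap z)" for z
  proof -
    obtain q1 q2 x y where "Q = (q1, q2)" "z = (x, y)" by (cases Q; cases z)
    moreover have "dist (q2, q1) (y, x) = dist (q1, q2) (x, y)"
      by (simp add: dist_Pair_Pair add.commute)
    ultimately show ?thesis by (simp add: w1_def v_def annulus_def indicator_def)
  qed
  have "indicator ?R z \<le> w1 z + w2 z" for z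
  proof (cases "z \<in> ?R")
    case True
    then have "0 < dist Q z" using assms by (auto simp: annulus_def)
    with dist_le_abs_diff_fst_add_abs_diff_snd[of Q z]
    have "1 \<le> \<bar>fst Q - fst z\<bar> / dist Q z + \<bar>snd Q - snd z\<bar> / dist Q z"
      by (simp add: add_divide_distrib[symmetric])
    then show ?thesis
      using True by (simp add: w1_def w2_def flip: ennreal_plus)
  qed (simp add: w1_def w2_def)
  then have "emeasure lborel ?R \<le> (\<integral>\<^sup>+z. w1 z \<partial>lborel) + (\<integral>\<^sup>+z. w2 z \<partial>lborel)"
    by (subst nn_integral_add[symmetric]) (auto intro!: nn_integral_mono simp flip: nn_integral_indicator)
  also have "(\<integral>\<^sup>+z. w1 z \<partial>lborel) = (\<integral>\<^sup>+z. v (prod.swap z) \<partial>lborel)"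
    by (simp add: w1_swap)
  also have "\<dots> = (\<integral>\<^sup>+z. v z \<partial>lborel)"
    by (rule nn_integral_lborel_swap) measurable
  also have "\<dots> + (\<integral>\<^sup>+z. w2 z \<partial>lborel)
      \<le> ennreal (2 * (r - s)) * emeasure lborel B + ennreal (2 * (r - s)) * emeasure lborel A"
    unfolding v_def w2_def using assms by (intro add_mono nn_integral_annulus_weight_le) auto
  finally show ?thesis by (simp add: distrib_left add.commute)
qed

lemma unit_sq_eq_Times: "unit_sq = {0..1} \<times> {0..1}"
  by (simp add: unit_sq_def cbox_Pair_eq)

lemma unit_sq_in_sets_borel [measurable]: "unit_sq \<in> sets borel"
  by (simp add: unit_sq_def)

lemma emeasure_unit_sq: "emeasure lborel unit_sq = 1"
  by (simp add: unit_sq_def emeasure_lborel_cbox_eq Basis_prod_def)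

lemma emeasure_eq_measure_subset_unit_sq:
  assumes "A \<subseteq> unit_sq" "A \<in> sets borel"
  shows "emeasure lborel A = ennreal (measure lborel A)"
proof -
  have "emeasure lborel A \<le> 1"
    using assms emeasure_mono[of A unit_sq lborel] by (simp add: emeasure_unit_sq)
  then show ?thesis
    by (intro emeasure_eq_ennreal_measure) (auto simp: top_unique)
qed

definition far_area :: "real \<times> real \<Rightarrow> real \<Rightarrow> real" where
  "far_area P r = measure lborel {x \<in> unit_sq. r < dist P x}"

lemma g3_eq_far_area: "g3 P = far_area P (3/4 * g1 P)"
  by (simp add: g3_def far_area_def)

lemma far_area_antimono:
  assumes "s \<le> r"
  shows "far_area Q r \<le> far_area Q s"
  unfolding far_area_def using assms
  by (intro measure_mono_fmeasurable) (auto simp: fmeasurable_def emeasure_eq_measure_subset_unit_sq)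

lemma far_area_diff_le:
  assumes "0 \<le> s" "s \<le> r"
  shows "far_area Q s - far_area Q r \<le> 4 * (r - s)"
proof -
  have far_subset: "{x \<in> unit_sq. r < dist Q x} \<subseteq> {x \<in> unit_sq. s < dist Q x}"
    using assms by auto
  have "far_area Q s - far_area Q r
      = measure lborel ({x \<in> unit_sq. s < dist Q x} - {x \<in> unit_sq. r < dist Q x})"
    unfolding far_area_def
    by (rule measure_Diff[symmetric, OF _ _ _ far_subset]) (auto simp: emeasure_eq_measure_subset_unit_sq)
  also have "{x \<in> unit_sq. s < dist Q x} - {x \<in> unit_sq. r < dist Q x} = unit_sq \<inter> annulus Q s r"
    by (auto simp: annulus_def)
  finally have diff_eq: "far_area Q s - far_area Q r = measure lborel (unit_sq \<inter> annulus Q s r)" .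
  have "ennreal (measure lborel (unit_sq \<inter> annulus Q s r)) = emeasure lborel (unit_sq \<inter> annulus Q s r)"
    by (simp add: emeasure_eq_measure_subset_unit_sq)
  also have "\<dots> \<le> ennreal (2 * (r - s)) * 2"
    using emeasure_annulus_le[of "{0..1}" "{0..1}" s r Q] assms by (simp add: unit_sq_eq_Times)
  also have "\<dots> = ennreal (4 * (r - s))"
    using assms by (simp add: mult.commute numeral_mult_ennreal)
  finally show ?thesis
    using assms by (simp add: diff_eq ennreal_le_iff)
qed

lemma abs_far_area_radius_diff_le:
  assumes "0 \<le> s" "0 \<le> r"
  shows "\<bar>far_area Q s - far_area Q r\<bar> \<le> 4 * \<bar>s - r\<bar>"
  using far_area_diff_le[of s r Q] far_area_diff_le[of r s Q]
    far_area_antimono[of s r Q] far_area_antimono[of r s Q] assms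
  by (cases "s \<le> r") auto

lemma emeasure_lborel_translate:
  fixes c :: "'a::euclidean_space"
  assumes "A \<in> sets borel"
  shows "emeasure lborel ((+) c -` A) = emeasure lborel A"
proof -
  have "emeasure lborel A = emeasure (distr lborel borel ((+) c)) A"
    by (simp add: lborel_distr_plus)
  also have "\<dots> = emeasure lborel ((+) c -` A)"
    using assms by (subst emeasure_distr) auto
  finally show ?thesis ..
qed

lemma emeasure_lborel_cbox_Pair:
  fixes a b c d :: real
  shows "emeasure lborel (cbox (a, b) (c, d)) = ennreal (max (c - a) 0 * max (d - b) 0)"
  by (auto simp: emeasure_lborel_cbox_eq Basis_prod_def ennreal_mult mult.commute)

lemma emeasure_unit_sq_diff_translate_le:
  "emeasure lborel (unit_sq - (+) c -` unit_sq) \<le> ennreal (\<bar>fst c\<bar> + \<bar>snd c\<bar>)"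
proof -
  obtain t1 t2 where c: "c = (t1, t2)" by (cases c)
  define B1 where "B1 = cbox (0, 0) (- t1, 1::real)"
  define B2 where "B2 = cbox (1 - t1, 0) (1, 1::real)"
  define B3 where "B3 = cbox (0, 0) (1::real, - t2)"
  define B4 where "B4 = cbox (0, 1 - t2) (1::real, 1)"
  have "unit_sq - (+) c -` unit_sq \<subseteq> B1 \<union> B2 \<union> B3 \<union> B4"
    by (auto simp: unit_sq_def c B1_def B2_def B3_def B4_def cbox_Pair_iff)
  then have "emeasure lborel (unit_sq - (+) c -` unit_sq) \<le> emeasure lborel (B1 \<union> B2 \<union> B3 \<union> B4)"
    by (intro emeasure_mono) (auto simp: B1_def B2_def B3_def B4_def)
  also have "\<dots> \<le> emeasure lborel B1 + emeasure lborel B2 + emeasure lborel B3 + emeasure lborel B4"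
    by (intro order_trans[OF emeasure_subadditive] add_mono order_refl)
       (auto simp: B1_def B2_def B3_def B4_def)
  also have "\<dots> = ennreal (max (- t1) 0) + ennreal (max t1 0) + ennreal (max (- t2) 0) + ennreal (max t2 0)"
    by (simp add: B1_def B2_def B3_def B4_def emeasure_lborel_cbox_Pair)
  also have "\<dots> = ennreal (max (- t1) 0 + max t1 0 + max (- t2) 0 + max t2 0)"
    by (simp add: ennreal_plus)
  also have "max (- t1) 0 + max t1 0 + max (- t2) 0 + max t2 0 = \<bar>fst c\<bar> + \<bar>snd c\<bar>"
    by (simp add: c)
  finally show ?thesis .
qed

lemma translate_unit_sq_in_sets_borel [measurable]: "(+) c -` unit_sq \<in> sets borel"
proof -
  have "(+) c \<in> borel_measurable borel"
    by (intro borel_measurable_continuous_onI continuous_intros)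
  from measurable_sets[OF this unit_sq_in_sets_borel] show ?thesis
    by simp
qed

lemma emeasure_translate_unit_sq_inter_far:
  "emeasure lborel ((+) (Q - P) -` unit_sq \<inter> {y. r < dist P y}) = ennreal (far_area Q r)"
proof -
  have "dist Q (Q - P + y) = dist P y" for y
    by (simp add: dist_norm algebra_simps)
  then have "(+) (Q - P) -` {x \<in> unit_sq. r < dist Q x} = (+) (Q - P) -` unit_sq \<inter> {y. r < dist P y}"
    by auto
  then show ?thesis
    using emeasure_lborel_translate[of "{x \<in> unit_sq. r < dist Q x}" "Q - P"]
    by (simp add: far_area_def emeasure_eq_measure_subset_unit_sq)
qed

lemma abs_fst_add_abs_snd_le: "\<bar>fst z\<bar> + \<bar>snd z\<bar> \<le> sqrt 2 * norm (z :: real \<times> real)"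
  using complex_abs_le_norm[of "Complex (fst z) (snd z)"]
  by (cases z) (simp add: norm_Pair complex_norm)

lemma far_area_le_far_area_add:
  "far_area P r \<le> far_area Q r + sqrt 2 * dist P Q"
proof -
  define c where "c = Q - P"
  define D where "D = {y. r < dist P y}"
  define T where "T = (+) c -` unit_sq"
  have [measurable]: "D \<in> sets borel" "T \<in> sets borel"
    unfolding D_def T_def by measurable
  have "{x \<in> unit_sq. r < dist P x} = unit_sq \<inter> D"
    by (auto simp: D_def)
  then have "ennreal (far_area P r) = emeasure lborel (unit_sq \<inter> D)"
    by (simp add: far_area_def emeasure_eq_measure_subset_unit_sq)
  also have "\<dots> \<le> emeasure lborel ((T \<inter> D) \<union> (unit_sq - T))"
    by (intro emeasure_mono) auto
  also have "\<dots> \<le> emeasure lborel (T \<inter> D) + emeasure lborel (unit_sq - T)"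
    by (intro emeasure_subadditive) auto
  also have "\<dots> \<le> ennreal (far_area Q r) + ennreal (sqrt 2 * dist P Q)"
  proof (intro add_mono)
    have "emeasure lborel (unit_sq - T) \<le> ennreal (\<bar>fst c\<bar> + \<bar>snd c\<bar>)"
      unfolding T_def by (rule emeasure_unit_sq_diff_translate_le)
    also have "\<dots> \<le> ennreal (sqrt 2 * dist P Q)"
      using abs_fst_add_abs_snd_le[of c] by (intro ennreal_leI) (simp add: c_def dist_norm norm_minus_commute)
    finally show "emeasure lborel (unit_sq - T) \<le> ennreal (sqrt 2 * dist P Q)" .
  qed (simp add: T_def D_def c_def emeasure_translate_unit_sq_inter_far)
  also have "\<dots> = ennreal (far_area Q r + sqrt 2 * dist P Q)"
    by (rule ennreal_plus[symmetric]) (simp_all add: far_area_def)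
  finally have "ennreal (far_area P r) \<le> ennreal (far_area Q r + sqrt 2 * dist P Q)" .
  moreover have "0 \<le> far_area Q r + sqrt 2 * dist P Q"
    by (simp add: far_area_def)
  ultimately show ?thesis
    by (metis ennreal_le_iff)
qed

lemma abs_far_area_centre_diff_le: "\<bar>far_area P r - far_area Q r\<bar> \<le> sqrt 2 * dist P Q"
  using far_area_le_far_area_add[of P r Q] far_area_le_far_area_add[of Q r P]
  by (auto simp: dist_commute)

lemma integral_dist_le_integral_dist_add:
  fixes M :: "'a::metric_space measure"
  assumes "finite_measure M" "integrable M (dist P)" "integrable M (dist Q)"
  shows "(\<integral>v. dist P v \<partial>M) \<le> (\<integral>v. dist Q v \<partial>M) + dist P Q * measure M (space M)"
proof -
  interpret finite_measure M by fact
  have "(\<integral>v. dist P v \<partial>M) \<le> (\<integral>v. dist Q v + dist P Q \<partial>M)"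
    using assms dist_triangle[of P _ Q] by (intro integral_mono) (auto simp: add.commute)
  also have "\<dots> = (\<integral>v. dist Q v \<partial>M) + dist P Q * measure M (space M)"
    using assms by simp
  finally show ?thesis .
qed

lemma emeasure_uniform_unit_sq_space: "emeasure (uniform_measure lborel unit_sq) (space lborel) = 1"
  by (simp add: emeasure_unit_sq)

lemma finite_measure_uniform_unit_sq: "finite_measure (uniform_measure lborel unit_sq)"
  using emeasure_uniform_unit_sq_space by (intro finite_measureI) simp

lemma integrable_uniform_unit_sq_dist: "integrable (uniform_measure lborel unit_sq) (dist P)"
proof -
  interpret finite_measure "uniform_measure lborel unit_sq"
    by (rule finite_measure_uniform_unit_sq)
  obtain B where "\<forall>x \<in> unit_sq. dist P x \<le> B"
    using bounded_any_center[of unit_sq P] by (auto simp: unit_sq_def)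
  then show ?thesis
    by (intro integrable_const_bound[where B = B] AE_uniform_measureI) auto
qed

lemma abs_g1_diff_le: "\<bar>g1 P - g1 Q\<bar> \<le> dist P Q"
proof -
  have "measure (uniform_measure lborel unit_sq) (space (uniform_measure lborel unit_sq)) = 1"
    using emeasure_uniform_unit_sq_space by (simp add: measure_def)
  then show ?thesis
    using finite_measure_uniform_unit_sq
      integral_dist_le_integral_dist_add[of "uniform_measure lborel unit_sq" P Q]
      integral_dist_le_integral_dist_add[of "uniform_measure lborel unit_sq" Q P]
    by (auto simp: g1_def integrable_uniform_unit_sq_dist dist_commute)
qed

lemma g1_nonneg: "0 \<le> g1 P"
  unfolding g1_def by (simp add: integral_nonneg)

theorem lemma21:
  fixes P Q :: "real \<times> real"
  shows "\<bar>g3 P - g3 Q\<bar> \<le> (3 + sqrt 2) * dist P Q"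
proof -
  define a b where "a = 3/4 * g1 P" and "b = 3/4 * g1 Q"
  have "\<bar>a - b\<bar> \<le> 3/4 * dist P Q"
    using abs_g1_diff_le[of P Q] unfolding a_def b_def abs_le_iff by linarith
  have "\<bar>g3 P - g3 Q\<bar> \<le> \<bar>far_area P a - far_area Q a\<bar> + \<bar>far_area Q a - far_area Q b\<bar>"
    unfolding g3_eq_far_area a_def[symmetric] b_def[symmetric] by linarith
  also have "\<dots> \<le> sqrt 2 * dist P Q + 4 * \<bar>a - b\<bar>"
    using abs_far_area_centre_diff_le abs_far_area_radius_diff_le g1_nonneg
    by (intro add_mono) (auto simp: a_def b_def)
  also have "\<dots> \<le> (3 + sqrt 2) * dist P Q"
    using \<open>\<bar>a - b\<bar> \<le> 3/4 * dist P Q\<close> by (simp add: algebra_simps)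
  finally show ?thesis .
qed

end
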